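(* Let $X\subset A^+$ be a finite set. Then $X$ is synchronized if and only if its degree $d(X)$ equals $1$.
   Context: A word $x\in A^*$ is synchronizing for $X$ if for all $u,v\in A^*$, $uxv\in X^*$ implies $ux\in X^*$ and $xv\in X^*$. $X$ is synchronized if there is a synchronizing word $x\in X^*$. The flower automaton of $X$ has states $\{(u,v)\in A^+\times A^+\mid uv\in X\}\cup\{\omega\}$, $\omega=(1,1)$ initial and terminal, and edges $(u,av)\xrightarrow{a}(ua,v)$ ($uav\in X$, $u,v\ne1$), $\omega\xrightarrow{a}(a,v)$ ($av\in X$, $v\ne1$), $(u,a)\xrightarrow{a}\omega$ ($ua\in X$, $u\ne1$), $\omega\xrightarrow{a}\omega$ ($a\in X$). For an automaton $\mathcal{A}$, $\varphi_\mathcal{A}(w)$ is the relation $\{(p,q)\mid$ there is a path $p\xrightarrow{w}q\}$. The rank of a relation $m$ on $Q$ is the least cardinality of a set $R$ with $m=uv$, $u\subseteq Q\times R$, $v\subseteq R\times Q$ (composition $uv=\{(p,q)\mid\exists r,(p,r)\in u,(r,q)\in v\}$). The degree $d(X)$ is the minimum rank of the nonempty relations in the monoid $\varphi_\mathcal{A}(A^* )$, where $\mathcal{A}$ is the flower automaton of $X$. *)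

theory Defs
  imports Main
begin

text \<open>Words over an alphabet are lists; the alphabet is a set A of letters,
  A^* = lists A, A^+ = lists A - {[]}.\<close>

definition star :: "'a list set \<Rightarrow> 'a list set" where
  "star X = concat ` lists X"

definition synchronizing :: "'a set \<Rightarrow> 'a list set \<Rightarrow> 'a list \<Rightarrow> bool" where
  "synchronizing A X x \<longleftrightarrow> x \<in> lists A \<and>
     (\<forall>u\<in>lists A. \<forall>v\<in>lists A. u @ x @ v \<in> star X \<longrightarrow> u @ x \<in> star X \<and> x @ v \<in> star X)"

definition synchronized :: "'a set \<Rightarrow> 'a list set \<Rightarrow> bool" where
  "synchronized A X \<longleftrightarrow> (\<exists>x\<in>star X. synchronizing A X x)"

definition flower_states :: "'a list set \<Rightarrow> ('a list \<times> 'a list) set" where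
  "flower_states X = {(u, v). u \<noteq> [] \<and> v \<noteq> [] \<and> u @ v \<in> X} \<union> {([], [])}"

definition flower_step :: "'a list set \<Rightarrow> 'a \<Rightarrow> (('a list \<times> 'a list) \<times> ('a list \<times> 'a list)) set" where
  "flower_step X a =
     {((u, a # v), (u @ [a], v)) | u v. u @ [a] @ v \<in> X \<and> u \<noteq> [] \<and> v \<noteq> []}
   \<union> {(([], []), ([a], v)) | v. a # v \<in> X \<and> v \<noteq> []}
   \<union> {((u, [a]), ([], [])) | u. u @ [a] \<in> X \<and> u \<noteq> []}
   \<union> {(([], []), ([], [])) | b. b = a \<and> [a] \<in> X}"

fun flower_phi :: "'a list set \<Rightarrow> 'a list \<Rightarrow> (('a list \<times> 'a list) \<times> ('a list \<times> 'a list)) set" where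
  "flower_phi X [] = Id_on (flower_states X)"
| "flower_phi X (a # w) = flower_step X a O flower_phi X w"

text \<open>R ranges over sets of naturals,
  which suffices since the rank is at most |Q|.\<close>

definition rel_rank :: "'q set \<Rightarrow> ('q \<times> 'q) set \<Rightarrow> nat" where
  "rel_rank Q m = (LEAST k. \<exists>(R::nat set) u v. finite R \<and> card R = k \<and>
       u \<subseteq> Q \<times> R \<and> v \<subseteq> R \<times> Q \<and> m = u O v)"

definition degree :: "'a set \<Rightarrow> 'a list set \<Rightarrow> nat" where
  "degree A X = (LEAST k. \<exists>w\<in>lists A. flower_phi X w \<noteq> {} \<and>
       rel_rank (flower_states X) (flower_phi X w) = k)"

end

theory Submission
  imports Defs
begin

text \<open>The flower automaton recognises exactly X*: the words labelling paths from
  omega to omega are those of X*, and a path from p to q labelled w either stays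
  inside one word of X or passes through omega, in which case w = snd p @ t @ fst q
  with t in X*.  A nonempty relation has rank 1 iff it is a rectangle
  Domain \<times> Range.  If z in X* is synchronizing and y in X* is at least as long as
  every word of X, every path labelled y z z y passes through omega inside each
  copy of y; synchronization then reconnects any start state with any end state,
  so the relation of y z z y is a rectangle.  Conversely, a rectangular relation
  of some word extends to a rectangular relation of a word z containing
  (omega, omega); such a z lies in X*, and a path from omega to omega through z can
  be rerouted through omega at either end of z, which says that z is
  synchronizing.\<close>

subsection \<open>The submonoid generated by a set of words\<close>

lemma star_Nil [simp]: "[] \<in> star X"
  unfolding star_def by (metis concat.simps(1) image_eqI lists.Nil)

lemma star_append:
  assumes "u \<in> star X" and "v \<in> star X"
  shows "u @ v \<in> star X"
proof -
  obtain xs ys where "xs \<in> lists X" "ys \<in> lists X" "u = concat xs" "v = concat ys"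
    using assms unfolding star_def by blast
  then show ?thesis
    unfolding star_def by (intro image_eqI[of _ _ "xs @ ys"]) auto
qed

lemma star_of_mem: "x \<in> X \<Longrightarrow> x \<in> star X"
  unfolding star_def by (metis concat.simps(1,2) append_Nil2 image_eqI lists.Cons lists.Nil)

lemma concat_mem_star: "set xs \<subseteq> X \<Longrightarrow> concat xs \<in> star X"
  unfolding star_def by blast

lemma star_subset_lists: "X \<subseteq> lists A \<Longrightarrow> star X \<subseteq> lists A"
proof
  fix w assume XA: "X \<subseteq> lists A" and "w \<in> star X"
  then obtain xs where "xs \<in> lists X" "w = concat xs" unfolding star_def by blast
  then show "w \<in> lists A" using XA by (induction xs arbitrary: w) auto
qed

subsection \<open>Paths in the flower automaton\<close>

abbreviation omega :: "'a list \<times> 'a list" (\<open>\<omega>\<close>) where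
  "\<omega> \<equiv> ([], [])"

lemma omega_mem_flower_states [simp]: "\<omega> \<in> flower_states X"
  by (simp add: flower_states_def)

lemma flower_state_eq_omega: "p \<in> flower_states X \<Longrightarrow> fst p = [] \<or> snd p = [] \<Longrightarrow> p = \<omega>"
  by (auto simp: flower_states_def)

lemma flower_state_mem_star: "p \<in> flower_states X \<Longrightarrow> fst p @ snd p \<in> star X"
  by (auto simp: flower_states_def intro: star_of_mem)

lemma flower_state_lists:
  "p \<in> flower_states X \<Longrightarrow> X \<subseteq> lists A \<Longrightarrow> fst p \<in> lists A \<and> snd p \<in> lists A"
  using flower_state_mem_star[of p X] star_subset_lists[of X A] by auto

lemma flower_state_length:
  "p \<in> flower_states X \<Longrightarrow> \<forall>x\<in>X. length x \<le> n \<Longrightarrow> length (fst p) \<le> n \<and> length (snd p) \<le> n"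
  by (auto simp: flower_states_def)

lemma finite_flower_states: "finite X \<Longrightarrow> finite (flower_states X)"
proof -
  assume "finite X"
  moreover have "flower_states X \<subseteq> insert \<omega> (\<Union>x\<in>X. (\<lambda>i. (take i x, drop i x)) ` {..length x})"
  proof
    fix p assume "p \<in> flower_states X"
    then show "p \<in> insert \<omega> (\<Union>x\<in>X. (\<lambda>i. (take i x, drop i x)) ` {..length x})"
      unfolding flower_states_def
      by (auto intro!: bexI[of _ "fst p @ snd p"] image_eqI[of _ _ "length (fst p)"])
  qed
  ultimately show ?thesis by (auto intro: finite_subset)
qed

lemma flower_phi_subset: "flower_phi X w \<subseteq> flower_states X \<times> flower_states X"
proof (induction w)
  case (Cons a w)
  have "flower_step X a \<subseteq> flower_states X \<times> flower_states X"
    unfolding flower_step_def flower_states_def by auto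
  with Cons show ?case by auto
qed auto

lemma flower_phi_append: "flower_phi X (u @ v) = flower_phi X u O flower_phi X v"
proof (induction u)
  case Nil
  show ?case using flower_phi_subset[of X v] by auto
qed (simp add: O_assoc)

lemma flower_step_cases:
  assumes "(p, r) \<in> flower_step X a"
  obtains (inner) "fst r = fst p @ [a]" "snd p = a # snd r"
    | (leave) "p = \<omega>" "fst r = [a]" "a # snd r \<in> X"
    | (enter) "r = \<omega>" "snd p = [a]" "fst p @ [a] \<in> X"
    | (loop) "p = \<omega>" "r = \<omega>" "[a] \<in> X"
  using assms unfolding flower_step_def by auto

lemma flower_phi_cases:
  "(p, q) \<in> flower_phi X w \<Longrightarrow>
     (\<exists>t\<in>star X. w = snd p @ t @ fst q) \<or> (fst q = fst p @ w \<and> snd p = w @ snd q)"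
proof (induction w arbitrary: p)
  case (Cons a w)
  then obtain r where pr: "(p, r) \<in> flower_step X a" and rq: "(r, q) \<in> flower_phi X w"
    by auto
  from Cons.IH[OF rq] consider
      t where "t \<in> star X" "w = snd r @ t @ fst q"
    | "fst q = fst r @ w" "snd r = w @ snd q"
    by blast
  then show ?case
  proof cases
    case (1 t)
    from pr show ?thesis
    proof (cases rule: flower_step_cases)
      case leave
      have "(a # snd r) @ t \<in> star X"
        using leave(3) 1(1) by (rule star_append[OF star_of_mem])
      with leave 1(2) show ?thesis by (intro disjI1 bexI[of _ "(a # snd r) @ t"]) auto
    next
      case loop
      have "[a] @ t \<in> star X"
        using loop(3) 1(1) by (rule star_append[OF star_of_mem])
      with loop 1(2) show ?thesis by (intro disjI1 bexI[of _ "[a] @ t"]) auto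
    qed (use 1 in auto)
  next
    case 2
    from pr show ?thesis
    proof (cases rule: flower_step_cases)
      case leave
      with 2 show ?thesis by (auto intro!: bexI[of _ "[]"])
    next
      case enter
      with 2 show ?thesis by (auto intro!: bexI[of _ "[]"])
    next
      case loop
      with 2 show ?thesis by (auto intro!: bexI[of _ "[a]"] star_of_mem)
    qed (use 2 in auto)
  qed
qed auto

lemma flower_phi_mem_star: "(p, q) \<in> flower_phi X w \<Longrightarrow> fst p @ w @ snd q \<in> star X"
proof -
  assume pq: "(p, q) \<in> flower_phi X w"
  have states: "p \<in> flower_states X" "q \<in> flower_states X"
    using pq flower_phi_subset by blast+
  from flower_phi_cases[OF pq] show ?thesis
  proof
    assume "\<exists>t\<in>star X. w = snd p @ t @ fst q"
    then obtain t where "t \<in> star X" "w = snd p @ t @ fst q" by blast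
    then show ?thesis
      using flower_state_mem_star[OF states(1)] flower_state_mem_star[OF states(2)]
      by (metis append.assoc star_append)
  qed (use flower_state_mem_star[OF states(2)] in auto)
qed

lemma flower_phi_through_omega:
  assumes pq: "(p, q) \<in> flower_phi X w" and len: "length (snd p) \<le> length w"
  shows "\<exists>t\<in>star X. w = snd p @ t @ fst q"
proof -
  have states: "p \<in> flower_states X" "q \<in> flower_states X"
    using pq flower_phi_subset by blast+
  show ?thesis
  proof (cases "fst q = fst p @ w \<and> snd p = w @ snd q")
    case True
    with len have "q = \<omega>" using flower_state_eq_omega[OF states(2)] by auto
    with True have "p = \<omega>" "w = []" "fst q = []" using flower_state_eq_omega[OF states(1)] by auto
    then show ?thesis by auto
  qed (use flower_phi_cases[OF pq] in blast)
qed

lemma flower_phi_inside_word: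
  "u \<noteq> [] \<Longrightarrow> u @ v\<^sub>1 @ v\<^sub>2 \<in> X \<Longrightarrow> v\<^sub>2 \<noteq> [] \<Longrightarrow>
     ((u, v\<^sub>1 @ v\<^sub>2), (u @ v\<^sub>1, v\<^sub>2)) \<in> flower_phi X v\<^sub>1"
proof (induction v\<^sub>1 arbitrary: u)
  case Nil
  then show ?case by (auto simp: flower_states_def)
next
  case (Cons a v\<^sub>1)
  then have "((u, a # v\<^sub>1 @ v\<^sub>2), (u @ [a], v\<^sub>1 @ v\<^sub>2)) \<in> flower_step X a"
    unfolding flower_step_def by auto
  with Cons.IH[of "u @ [a]"] Cons.prems show ?case by auto
qed

lemma flower_phi_to_omega: "p \<in> flower_states X \<Longrightarrow> (p, \<omega>) \<in> flower_phi X (snd p)"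
proof (cases "p = \<omega>")
  case False
  assume "p \<in> flower_states X"
  with False obtain u v' where p: "p = (u, v')" "u \<noteq> []" "v' \<noteq> []" "u @ v' \<in> X"
    unfolding flower_states_def by auto
  then obtain v a where v': "v' = v @ [a]" by (metis rev_exhaust)
  have "((u, v @ [a]), (u @ v, [a])) \<in> flower_phi X v"
    using flower_phi_inside_word[of u v "[a]" X] p v' by auto
  moreover have "((u @ v, [a]), \<omega>) \<in> flower_phi X [a]"
    using p v' by (auto simp: flower_step_def)
  ultimately show ?thesis using p v' by (auto simp: flower_phi_append)
qed auto

lemma flower_phi_from_omega: "q \<in> flower_states X \<Longrightarrow> (\<omega>, q) \<in> flower_phi X (fst q)"
proof (cases "q = \<omega>")
  case False
  assume "q \<in> flower_states X"
  with False obtain a u v where q: "q = (a # u, v)" "v \<noteq> []" "a # u @ v \<in> X"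
    unfolding flower_states_def by (auto simp: neq_Nil_conv)
  then have "(\<omega>, ([a], u @ v)) \<in> flower_step X a"
    by (auto simp: flower_step_def)
  moreover have "(([a], u @ v), (a # u, v)) \<in> flower_phi X u"
    using flower_phi_inside_word[of "[a]" u v X] q by auto
  ultimately show ?thesis using q by auto
qed auto

lemma flower_phi_omega_of_mem: "x \<in> X \<Longrightarrow> (\<omega>, \<omega>) \<in> flower_phi X x"
proof (cases x)
  case (Cons a v)
  assume xX: "x \<in> X"
  show ?thesis
  proof (cases "v = []")
    case True
    with Cons xX show ?thesis by (auto simp: flower_step_def)
  next
    case False
    then have q: "([a], v) \<in> flower_states X"
      using Cons xX by (auto simp: flower_states_def)
    show ?thesis
      using flower_phi_from_omega[OF q] flower_phi_to_omega[OF q] Cons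
      by (auto simp: flower_phi_append[of X "[a]" v, simplified])
  qed
qed auto

lemma flower_phi_omega_iff: "(\<omega>, \<omega>) \<in> flower_phi X w \<longleftrightarrow> w \<in> star X"
proof
  assume "w \<in> star X"
  then obtain xs where "xs \<in> lists X" "w = concat xs" unfolding star_def by blast
  then show "(\<omega>, \<omega>) \<in> flower_phi X w"
    by (induction xs arbitrary: w) (auto simp: flower_phi_append intro: flower_phi_omega_of_mem)
qed (use flower_phi_mem_star in fastforce)

lemma flower_phi_via_star:
  "p \<in> flower_states X \<Longrightarrow> q \<in> flower_states X \<Longrightarrow> t \<in> star X \<Longrightarrow>
     (p, q) \<in> flower_phi X (snd p @ t @ fst q)"
  unfolding flower_phi_append
  using flower_phi_to_omega flower_phi_from_omega flower_phi_omega_iff[of X t] by blast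

subsection \<open>Relations of rank one\<close>

definition rectangular :: "('q \<times> 'q) set \<Rightarrow> bool" where
  "rectangular m \<longleftrightarrow> (\<forall>p q' p' q. (p, q') \<in> m \<longrightarrow> (p', q) \<in> m \<longrightarrow> (p, q) \<in> m)"

lemma rectangular_relcomp: "rectangular m \<Longrightarrow> rectangular (a O m O b)"
  unfolding rectangular_def by blast

lemma rel_rank_factorization:
  assumes "finite Q" and "m \<subseteq> Q \<times> Q"
  obtains R :: "nat set" and u v where "finite R" "card R = rel_rank Q m"
    "u \<subseteq> Q \<times> R" "v \<subseteq> R \<times> Q" "m = u O v"
proof -
  obtain f :: "_ \<Rightarrow> nat" where f: "inj_on f Q"
    using finite_imp_inj_to_nat_seg[OF assms(1)] by blast
  define u where "u = {(p, f q) | p q. (p, q) \<in> m}"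
  define v where "v = {(f q, q) | q. q \<in> Q}"
  have "m = u O v"
  proof
    show "m \<subseteq> u O v" using assms(2) unfolding u_def v_def by blast
    show "u O v \<subseteq> m"
    proof
      fix x assume "x \<in> u O v"
      then obtain p q q' where "x = (p, q')" "(p, q) \<in> m" "q' \<in> Q" "f q = f q'"
        unfolding u_def v_def by blast
      with assms(2) f show "x \<in> m" by (metis inj_onD mem_Sigma_iff subsetD)
    qed
  qed
  moreover have "u \<subseteq> Q \<times> f ` Q" "v \<subseteq> f ` Q \<times> Q"
    using assms(2) unfolding u_def v_def by blast+
  ultimately have "\<exists>k (R::nat set) u v. finite R \<and> card R = k \<and>
      u \<subseteq> Q \<times> R \<and> v \<subseteq> R \<times> Q \<and> m = u O v"
    using assms(1) by (intro exI[of _ "card (f ` Q)"] exI[of _ "f ` Q"] exI[of _ u] exI[of _ v]) simp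
  from LeastI_ex[OF this] that show ?thesis
    unfolding rel_rank_def by blast
qed

lemma rel_rank_pos:
  assumes "finite Q" and "m \<subseteq> Q \<times> Q" and "m \<noteq> {}"
  shows "0 < rel_rank Q m"
proof -
  obtain R :: "nat set" and u v where "finite R" "card R = rel_rank Q m" "m = u O v"
    "u \<subseteq> Q \<times> R"
    using rel_rank_factorization[OF assms(1,2)] by metis
  with assms(3) show ?thesis by (cases "rel_rank Q m = 0") auto
qed

lemma rel_rank_eq_1_iff:
  assumes "finite Q" and "m \<subseteq> Q \<times> Q" and "m \<noteq> {}"
  shows "rel_rank Q m = 1 \<longleftrightarrow> rectangular m"
proof
  assume "rel_rank Q m = 1"
  then obtain R :: "nat set" and u v where "card R = 1" "u \<subseteq> Q \<times> R" "v \<subseteq> R \<times> Q"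
    "m = u O v"
    using rel_rank_factorization[OF assms(1,2)] by metis
  moreover from this(1) obtain r where "R = {r}" by (rule card_1_singletonE)
  ultimately show "rectangular m" unfolding rectangular_def by blast
next
  assume rect: "rectangular m"
  have "m = (Domain m \<times> {0::nat}) O ({0} \<times> Range m)"
  proof
    show "m \<subseteq> (Domain m \<times> {0::nat}) O ({0} \<times> Range m)" by auto
    show "(Domain m \<times> {0::nat}) O ({0} \<times> Range m) \<subseteq> m"
      using rect unfolding rectangular_def by auto
  qed
  moreover have "Domain m \<times> {0::nat} \<subseteq> Q \<times> {0}" "{0::nat} \<times> Range m \<subseteq> {0} \<times> Q"
    using assms(2) by blast+
  ultimately have "rel_rank Q m \<le> card {0::nat}"
    unfolding rel_rank_def by (intro Least_le) blast
  with rel_rank_pos[OF assms] show "rel_rank Q m = 1" by simp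
qed

lemma degree_eq_1_iff:
  assumes "finite X"
  shows "degree A X = 1 \<longleftrightarrow>
    (\<exists>w\<in>lists A. flower_phi X w \<noteq> {} \<and> rectangular (flower_phi X w))"
proof -
  let ?rank = "\<lambda>w. rel_rank (flower_states X) (flower_phi X w)"
  let ?P = "\<lambda>k. \<exists>w\<in>lists A. flower_phi X w \<noteq> {} \<and> ?rank w = k"
  have rank_iff: "flower_phi X w \<noteq> {} \<Longrightarrow> ?rank w = 1 \<longleftrightarrow> rectangular (flower_phi X w)"
    and rank_pos: "flower_phi X w \<noteq> {} \<Longrightarrow> 0 < ?rank w" for w
    using rel_rank_eq_1_iff[OF finite_flower_states[OF assms] flower_phi_subset]
      rel_rank_pos[OF finite_flower_states[OF assms] flower_phi_subset] by blast+
  show ?thesis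
  proof
    assume "degree A X = 1"
    moreover have "?P (?rank [])"
      by (intro bexI[of _ "[]"]) (auto simp: Id_on_def intro: omega_mem_flower_states)
    then have "?P (degree A X)"
      unfolding degree_def by (rule LeastI)
    ultimately show "\<exists>w\<in>lists A. flower_phi X w \<noteq> {} \<and> rectangular (flower_phi X w)"
      using rank_iff by auto
  next
    assume "\<exists>w\<in>lists A. flower_phi X w \<noteq> {} \<and> rectangular (flower_phi X w)"
    then have "?P 1" using rank_iff by blast
    moreover have "1 \<le> k" if "?P k" for k
      using that rank_pos by (metis One_nat_def Suc_leI)
    ultimately show "degree A X = 1"
      unfolding degree_def by (rule Least_equality)
  qed
qed

subsection \<open>Synchronizing words and rectangular transitions\<close>

lemma append_eq_append_prefixE:
  assumes "a @ b = c @ d" and "length a \<le> length c"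
  obtains s where "c = a @ s" and "b = s @ d"
proof
  have "take (length a) (a @ b) = take (length a) (c @ d)"
    and "drop (length a) (a @ b) = drop (length a) (c @ d)"
    using assms(1) by simp_all
  with assms(2) have "a = take (length a) c" "b = drop (length a) c @ d"
    by simp_all
  then show "c = a @ drop (length a) c" "b = drop (length a) c @ d"
    by (metis append_take_drop_id)+
qed

lemma append_eq_append_suffixE:
  assumes "a @ b = c @ d" and "length b \<le> length d"
  obtains s where "d = s @ b" and "a = c @ s"
proof -
  have "rev b @ rev a = rev d @ rev c" using assms(1) by (metis rev_append)
  with assms(2) obtain s where "rev d = rev b @ s" "rev a = s @ rev c"
    by (auto elim: append_eq_append_prefixE)
  then show thesis using that[of "rev s"] by (metis rev_append rev_rev_ident)
qed

lemma flower_phi_prefix: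
  assumes pq: "(p, q) \<in> flower_phi X (y @ r)" and len: "length (snd p) \<le> length y"
  obtains s where "y = snd p @ s" "s @ r @ snd q \<in> star X"
proof -
  obtain t where t: "t \<in> star X" "snd p @ (t @ fst q) = y @ r"
    using flower_phi_through_omega[OF pq] len by fastforce
  obtain s where "y = snd p @ s" "t @ fst q = s @ r"
    by (rule append_eq_append_prefixE[OF t(2) len])
  moreover have "t @ fst q @ snd q \<in> star X"
    using pq flower_phi_subset flower_state_mem_star t(1) by (blast intro: star_append)
  ultimately show thesis using that by (metis append_assoc)
qed

lemma flower_phi_suffix:
  assumes pq: "(p, q) \<in> flower_phi X (r @ y)"
    and len: "length (snd p) \<le> length (r @ y)" "length (fst q) \<le> length y"
  obtains s where "y = s @ fst q" "fst p @ r @ s \<in> star X"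
proof -
  obtain t where t: "t \<in> star X" "(snd p @ t) @ fst q = r @ y"
    using flower_phi_through_omega[OF pq len(1)] by fastforce
  obtain s where "y = s @ fst q" "snd p @ t = r @ s"
    by (rule append_eq_append_suffixE[OF t(2) len(2)])
  moreover have "(fst p @ snd p) @ t \<in> star X"
    using pq flower_phi_subset flower_state_mem_star t(1) by (blast intro: star_append)
  ultimately show thesis using that by (metis append_assoc)
qed

lemma rectangular_flower_phi_of_synchronizing:
  assumes XA: "X \<subseteq> lists A" and sync: "synchronizing A X z"
    and yA: "y \<in> lists A" and long: "\<forall>x\<in>X. length x \<le> length y"
  shows "rectangular (flower_phi X (y @ z @ z @ y))"
  unfolding rectangular_def
proof (intro allI impI)
  fix p q' p' q
  assume pq': "(p, q') \<in> flower_phi X (y @ z @ z @ y)"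
    and p'q: "(p', q) \<in> flower_phi X (y @ z @ z @ y)"
  have states: "p \<in> flower_states X" "q' \<in> flower_states X"
    "p' \<in> flower_states X" "q \<in> flower_states X"
    using pq' p'q flower_phi_subset by blast+
  have zA: "z \<in> lists A"
    and split: "\<And>u v. u \<in> lists A \<Longrightarrow> v \<in> lists A \<Longrightarrow> u @ z @ v \<in> star X \<Longrightarrow>
      u @ z \<in> star X \<and> z @ v \<in> star X"
    using sync unfolding synchronizing_def by auto
  have len_p: "length (snd p) \<le> length y" and len_p': "length (snd p') \<le> length y"
    and len_q: "length (fst q) \<le> length y"
    using flower_state_length[OF _ long] states by blast+
  obtain s where s: "y = snd p @ s" "s @ (z @ z @ y) @ snd q' \<in> star X"
    by (rule flower_phi_prefix[OF pq' len_p])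
  have "s \<in> lists A" "z @ y @ snd q' \<in> lists A"
    using s(1) yA zA flower_state_lists[OF states(2) XA] by auto
  with s(2) have left: "s @ z \<in> star X"
    using split[of s "z @ y @ snd q'"] by simp
  have p'q_split: "(p', q) \<in> flower_phi X ((y @ z @ z) @ y)"
    using p'q by simp
  obtain s' where s': "y = s' @ fst q" "fst p' @ (y @ z @ z) @ s' \<in> star X"
    by (rule flower_phi_suffix[OF p'q_split _ len_q]) (use len_p' in simp)
  have "fst p' @ y @ z \<in> lists A" "s' \<in> lists A"
    using s'(1) yA zA flower_state_lists[OF states(3) XA] by auto
  with s'(2) have right: "z @ s' \<in> star X"
    using split[of "fst p' @ y @ z" s'] by simp
  have "y @ z @ z @ y = snd p @ ((s @ z) @ (z @ s')) @ fst q"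
    using s(1) s'(1) by simp
  then show "(p, q) \<in> flower_phi X (y @ z @ z @ y)"
    using flower_phi_via_star[OF states(1,4) star_append[OF left right]] by simp
qed

lemma rectangular_flower_phi_omega:
  assumes "X \<subseteq> lists A" "w \<in> lists A"
    and "flower_phi X w \<noteq> {}" "rectangular (flower_phi X w)"
  obtains z where "z \<in> lists A" "rectangular (flower_phi X z)" "(\<omega>, \<omega>) \<in> flower_phi X z"
proof -
  obtain p q where pq: "(p, q) \<in> flower_phi X w" using assms(3) by auto
  then have states: "p \<in> flower_states X" "q \<in> flower_states X"
    using flower_phi_subset by blast+
  let ?z = "fst p @ w @ snd q"
  have phi_z: "flower_phi X ?z = flower_phi X (fst p) O flower_phi X w O flower_phi X (snd q)"
    by (simp add: flower_phi_append)
  show thesis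
  proof (rule that)
    show "?z \<in> lists A"
      using assms(1,2) flower_state_lists[OF states(1)] flower_state_lists[OF states(2)] by auto
    show "rectangular (flower_phi X ?z)"
      unfolding phi_z using assms(4) by (rule rectangular_relcomp)
    show "(\<omega>, \<omega>) \<in> flower_phi X ?z"
      unfolding phi_z using flower_phi_from_omega[OF states(1)] pq flower_phi_to_omega[OF states(2)]
      by blast
  qed
qed

lemma synchronizing_of_rectangular:
  assumes "z \<in> lists A" "rectangular (flower_phi X z)" "(\<omega>, \<omega>) \<in> flower_phi X z"
  shows "synchronizing A X z"
  unfolding synchronizing_def
proof (intro conjI ballI impI)
  fix u v assume "u @ z @ v \<in> star X"
  then obtain r s where "(\<omega>, r) \<in> flower_phi X u" "(r, s) \<in> flower_phi X z"
      "(s, \<omega>) \<in> flower_phi X v"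
    by (auto simp: flower_phi_omega_iff[symmetric] flower_phi_append)
  moreover from this(2) have "(r, \<omega>) \<in> flower_phi X z" "(\<omega>, s) \<in> flower_phi X z"
    using assms(2,3) unfolding rectangular_def by blast+
  ultimately show "u @ z \<in> star X" "z @ v \<in> star X"
    by (auto simp: flower_phi_omega_iff[symmetric] flower_phi_append)
qed (rule assms(1))

theorem mainTheorem12:
  fixes A :: "'a set" and X :: "'a list set"
  assumes "finite X" and "X \<subseteq> lists A - {[]}"
  shows "synchronized A X \<longleftrightarrow> degree A X = 1"
proof -
  have XA: "X \<subseteq> lists A" using assms(2) by blast
  show ?thesis unfolding degree_eq_1_iff[OF assms(1)]
  proof
    assume "synchronized A X"
    then obtain z where z: "z \<in> star X" "synchronizing A X z"
      unfolding synchronized_def by blast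
    obtain xs where xs: "set xs = X" using finite_list[OF assms(1)] by blast
    let ?y = "concat xs"
    have y: "?y \<in> star X" using xs by (simp add: concat_mem_star)
    have long: "\<forall>x\<in>X. length x \<le> length ?y"
      using xs by (simp add: length_concat member_le_sum_list)
    let ?w = "?y @ z @ z @ ?y"
    have w: "?w \<in> star X" using y z(1) by (simp add: star_append)
    show "\<exists>w\<in>lists A. flower_phi X w \<noteq> {} \<and> rectangular (flower_phi X w)"
    proof (intro bexI conjI)
      show "?w \<in> lists A" using w star_subset_lists[OF XA] by blast
      show "flower_phi X ?w \<noteq> {}" using w flower_phi_omega_iff by blast
      show "rectangular (flower_phi X ?w)"
        using rectangular_flower_phi_of_synchronizing[OF XA z(2)] y long star_subset_lists[OF XA]
        by blast
    qed
  next
    assume "\<exists>w\<in>lists A. flower_phi X w \<noteq> {} \<and> rectangular (flower_phi X w)"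
    then obtain z where "z \<in> lists A" "rectangular (flower_phi X z)"
      and omega: "(\<omega>, \<omega>) \<in> flower_phi X z"
      using rectangular_flower_phi_omega[OF XA] by blast
    then have "synchronizing A X z" by (rule synchronizing_of_rectangular)
    with omega show "synchronized A X"
      unfolding synchronized_def flower_phi_omega_iff by blast
  qed
qed

end
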